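(* For integers $k\geq1$ and $n_1,\dots,n_{k}\geq0$, \[ \sum_{\substack{t_1,\dots,t_k\ge0 \\ t_1=t_k=0}} \prod_{i=1}^{k-1} q^{t_{i+1}(n_{i+1} - t_i + t_{i+1})} \begin{bmatrix} n_i+t_i\\ n_i\end{bmatrix}_q \begin{bmatrix} n_i+n_{i+1}\\ n_i+t_i-t_{i+1}\end{bmatrix}_q = \begin{bmatrix} n_1+\cdots+n_{k}\\ n_1,\dots,n_{k}\end{bmatrix}_q. \]
   Context: $[m]_q=1+q+\dots+q^{m-1}$, $[m]_q!=[1]_q\cdots[m]_q$; $\begin{bmatrix} m\\ j\end{bmatrix}_q=\frac{[m]_q!}{[j]_q![m-j]_q!}$ for $0\le j\le m$ and $0$ otherwise; $\begin{bmatrix} n_1+\cdots+n_k\\ n_1,\dots,n_k\end{bmatrix}_q=\frac{[n_1+\cdots+n_k]_q!}{[n_1]_q!\cdots[n_k]_q!}$. The sum is over integer tuples; an empty product equals $1$. *)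

theory Defs
  imports "HOL-Computational_Algebra.Polynomial" "HOL-Library.Groups_Big_Fun"
begin

text \<open>q-analogues as polynomials in the formal variable q = [:0,1:].\<close>

definition qint :: "nat \<Rightarrow> 'a::field poly" where
  "qint m = (\<Sum>i<m. monom 1 i)"

definition qfact :: "nat \<Rightarrow> 'a::field poly" where
  "qfact m = (\<Prod>i=1..m. qint i)"

definition qbinom :: "int \<Rightarrow> int \<Rightarrow> 'a::field poly" where
  "qbinom m j = (if 0 \<le> j \<and> j \<le> m
     then qfact (nat m) div (qfact (nat j) * qfact (nat (m - j))) else 0)"

definition qmultinom :: "nat \<Rightarrow> (nat \<Rightarrow> nat) \<Rightarrow> 'a::field poly" where
  "qmultinom k n = qfact (\<Sum>i=1..k. n i) div (\<Prod>i=1..k. qfact (n i))"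

end

theory Submission
  imports Defs
begin

text \<open>
  Proof idea (a transfer-matrix argument).  Write N_k = n_1 + ... + n_k and let the
  weight of a step t_i \<rightarrow> t_{i+1} be the i-th factor of the product.  For a bound M \<ge> N_k,
  let G_k(s) be the sum of the product of the first k-1 weights over all tuples
  t_1, ..., t_k in [0, M] with t_1 = 0 and t_k = s.  Splitting off the last coordinate gives
  G_{k+1}(s') = \<Sum>_s G_k(s) w_k(s, s'), and by induction on k
      G_k(s) = q^{s(n_k+s)} [N_k, n_k+s] \<cdot> [N_{k-1}; n_1, ..., n_{k-1}].
  The induction step rests on three q-binomial facts: the trinomial revision
  [N, c+s][c+s, c] = [N, c][N-c, s], symmetry [m, j] = [m, m-j], and the q-Vandermonde
  identity \<Sum>_s q^{s(B-r+s)} [a, s][B, r-s] = [a+B, r].  Taking s = 0 and using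
  [N_k; n_1, ..., n_k] = [N_{k-1}; n_1, ..., n_{k-1}] [N_k, n_k] yields the theorem, once we
  know that every tuple contributing to the sum is bounded by N_k.
\<close>

lemma qint_altdef: "qint m = (\<Sum>i<m. [:0,1:] ^ i)"
  by (simp add: qint_def monom_altdef)

lemma qint_add: "(qint (a + b) :: 'a::field poly) = qint a + [:0,1:] ^ a * qint b"
  by (induct b) (simp_all add: qint_altdef algebra_simps power_add)

text \<open>[m+1]_q has constant term 1, so it is a nonzero polynomial.\<close>
lemma qint_Suc_nonzero: "(qint (Suc m) :: 'a::field poly) \<noteq> 0"
proof
  assume "(qint (Suc m) :: 'a poly) = 0"
  moreover have "poly (qint (Suc m) :: 'a poly) 0 = 1"
    by (simp add: qint_altdef poly_sum lessThan_Suc_eq_insert_0 sum.reindex zero_power)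
  ultimately show False by simp
qed

lemma qfact_0 [simp]: "qfact 0 = 1"
  by (simp add: qfact_def)

lemma qfact_Suc: "qfact (Suc m) = qfact m * qint (Suc m)"
  by (simp add: qfact_def)

lemma qfact_nonzero: "(qfact m :: 'a::field poly) \<noteq> 0"
  by (induct m) (simp_all add: qfact_Suc qint_Suc_nonzero)

text \<open>The Gaussian binomial defined by the q-Pascal recursion on natural numbers; it avoids
  the polynomial division in the definition of qbinom, which is recovered below.\<close>
fun qbin :: "nat \<Rightarrow> nat \<Rightarrow> 'a::field poly" where
  "qbin m 0 = 1"
| "qbin 0 (Suc j) = 0"
| "qbin (Suc m) (Suc j) = [:0,1:] ^ (m - j) * qbin m j + qbin m (Suc j)"

lemma qbin_eq_0: "m < j \<Longrightarrow> qbin m j = 0"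
proof (induct m arbitrary: j)
  case 0 then show ?case by (cases j) auto
next
  case (Suc m) then show ?case by (cases j) auto
qed

lemma qbin_qfact: "j \<le> m \<Longrightarrow> qfact j * qfact (m - j) * qbin m j = (qfact m :: 'a::field poly)"
proof (induct m arbitrary: j)
  case 0 then show ?case by simp
next
  case (Suc m j)
  show ?case
  proof (cases j)
    case 0 then show ?thesis by simp
  next
    case (Suc i)
    with Suc.prems have "i \<le> m" by simp
    with Suc.hyps have IH1: "qfact i * qfact (m - i) * qbin m i = (qfact m :: 'a poly)" by simp
    show ?thesis
    proof (cases "i = m")
      case True
      then show ?thesis using IH1 Suc by (simp add: qfact_Suc qbin_eq_0 qfact_nonzero algebra_simps)
    next
      case False
      with \<open>i \<le> m\<close> have "Suc i \<le> m" by simp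
      with Suc.hyps have IH2: "qfact (Suc i) * qfact (m - Suc i) * qbin m (Suc i) = (qfact m :: 'a poly)"
        by simp
      have diff: "m - i = Suc (m - Suc i)" using \<open>Suc i \<le> m\<close> by simp
      have split: "(qint (Suc m) :: 'a poly) = qint (m - i) + [:0,1:] ^ (m - i) * qint (Suc i)"
        using qint_add[of "m - i" "Suc i", where 'a='a] \<open>i \<le> m\<close> by simp
      have "qfact (Suc i) * qfact (Suc m - Suc i) * (qbin (Suc m) (Suc i) :: 'a poly)
          = [:0,1:] ^ (m - i) * qint (Suc i) * (qfact i * qfact (m - i) * qbin m i)
            + qint (m - i) * (qfact (Suc i) * qfact (m - Suc i) * qbin m (Suc i))"
        by (simp add: diff qfact_Suc algebra_simps)
      also have "\<dots> = qfact m * qint (Suc m)"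
        unfolding IH1 IH2 split by (simp add: algebra_simps)
      finally show ?thesis using Suc by (simp add: qfact_Suc)
    qed
  qed
qed

lemma qbinom_outside: "\<not> (0 \<le> j \<and> j \<le> m) \<Longrightarrow> qbinom m j = 0"
  by (auto simp: qbinom_def)

lemma qbinom_nonzeroD: "qbinom m j \<noteq> 0 \<Longrightarrow> 0 \<le> j \<and> j \<le> m"
  using qbinom_outside by blast

lemma qbinom_0_left: "qbinom 0 s = (if s = 0 then 1 else 0)"
  by (simp add: qbinom_def)

lemma qbinom_diag: "0 \<le> m \<Longrightarrow> qbinom m m = 1"
  by (simp add: qbinom_def qfact_nonzero)

lemma qbinom_of_nat: "qbinom (int m) (int j) = (qbin m j :: 'a::field poly)"
proof (cases "j \<le> m")
  case True
  then have "(qfact m :: 'a poly) = (qfact j * qfact (m - j)) * qbin m j"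
    by (simp add: qbin_qfact)
  moreover have "qbinom (int m) (int j) = (qfact m div (qfact j * qfact (m - j)) :: 'a poly)"
    using True by (simp add: qbinom_def nat_diff_distrib del: of_nat_diff)
  ultimately show ?thesis by (simp add: qfact_nonzero)
next
  case False
  then show ?thesis by (simp add: qbinom_def qbin_eq_0)
qed

lemma qbinom_qfact:
  assumes "0 \<le> j" "j \<le> m"
  shows "qfact (nat j) * qfact (nat (m - j)) * qbinom m j = (qfact (nat m) :: 'a::field poly)"
proof -
  obtain a b where ab: "j = int b" "m = int a" "b \<le> a"
    using assms by (metis nat_0_le order_trans of_nat_le_iff)
  then have "nat j = b" "nat (m - j) = a - b" "nat m = a" by auto
  with ab show ?thesis by (simp add: qbinom_of_nat qbin_qfact)
qed

text \<open>Powers of q with an integer exponent (negative exponents are truncated to 0, but they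
  never occur where the lemmas below are applied).\<close>
definition qpow :: "int \<Rightarrow> 'a::field poly" where
  "qpow e = [:0,1:] ^ nat e"

lemma qpow_0 [simp]: "qpow 0 = 1"
  by (simp add: qpow_def)

lemma qpow_add: "0 \<le> a \<Longrightarrow> 0 \<le> b \<Longrightarrow> qpow (a + b) = qpow a * qpow b"
  by (simp add: qpow_def nat_add_distrib power_add)

lemma qpow_mult_eq:
  assumes "0 \<le> x" "0 \<le> y" "0 \<le> z" "0 \<le> w" "x + y = z + w"
  shows "qpow x * qpow y = qpow z * qpow w"
  using assms by (metis qpow_add)

lemma qbinom_pascal:
  assumes "0 \<le> m"
  shows "qbinom (m + 1) (j + 1) = qpow (m - j) * qbinom m j + (qbinom m (j + 1) :: 'a::field poly)"
proof -
  obtain a where a: "m = int a" using assms by (metis nonneg_eq_int)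
  consider "j < -1" | "j = -1" | "0 \<le> j" by linarith
  then show ?thesis
  proof cases
    case 1 then show ?thesis by (simp add: qbinom_outside)
  next
    case 2 then show ?thesis using assms by (simp add: qbinom_def qfact_nonzero)
  next
    case 3
    then obtain b where b: "j = int b" by (metis nonneg_eq_int)
    have "nat (m - j) = a - b" using a b by arith
    then have "qpow (m - j) = ([:0,1:] ^ (a - b) :: 'a poly)" by (simp add: qpow_def)
    moreover have "qbinom (m + 1) (j + 1) = (qbin (Suc a) (Suc b) :: 'a poly)"
      "qbinom m (j + 1) = (qbin a (Suc b) :: 'a poly)"
      using qbinom_of_nat[of "Suc a" "Suc b"] qbinom_of_nat[of a "Suc b"] a b
      by (simp_all add: add.commute)
    ultimately show ?thesis using a b by (simp add: qbinom_of_nat)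
  qed
qed

text \<open>Both sides are [m]! divided by the same nonzero product of q-factorials.\<close>
lemma qbinom_symmetric:
  assumes "0 \<le> m"
  shows "qbinom m j = (qbinom m (m - j) :: 'a::field poly)"
proof (cases "0 \<le> j \<and> j \<le> m")
  case True
  let ?X = "qfact (nat j) * (qfact (nat (m - j)) :: 'a poly)"
  have "?X * qbinom m j = qfact (nat m)"
    using True by (simp add: qbinom_qfact)
  moreover have "?X * qbinom m (m - j) = qfact (nat m)"
    using True qbinom_qfact[of "m - j" m, where 'a='a] by (simp add: ac_simps)
  moreover have "?X \<noteq> 0" by (simp add: qfact_nonzero)
  ultimately show ?thesis by (metis mult_left_cancel)
next
  case False
  then have "\<not> (0 \<le> m - j \<and> m - j \<le> m)" by auto
  with False show ?thesis by (simp add: qbinom_outside)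
qed

text \<open>Trinomial revision [N, c+s][c+s, c] = [N, c][N-c, s]: both sides are
  [N]! / ([c]! [s]! [N-c-s]!).\<close>
lemma qbinom_trinomial:
  assumes "0 \<le> c" "0 \<le> s" "c \<le> N"
  shows "qbinom N (c + s) * qbinom (c + s) c = qbinom N c * (qbinom (N - c) s :: 'a::field poly)"
proof (cases "c + s \<le> N")
  case False then show ?thesis by (simp add: qbinom_outside)
next
  case True
  define D where "D = qfact (nat c) * qfact (nat s) * (qfact (nat (N - (c + s))) :: 'a poly)"
  have fN_left: "qfact (nat (c + s)) * qfact (nat (N - (c + s))) * qbinom N (c + s) = (qfact (nat N) :: 'a poly)"
    and f_cs: "qfact (nat c) * qfact (nat s) * qbinom (c + s) c = (qfact (nat (c + s)) :: 'a poly)"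
    and fN_right: "qfact (nat c) * qfact (nat (N - c)) * qbinom N c = (qfact (nat N) :: 'a poly)"
    and f_Nc: "qfact (nat s) * qfact (nat (N - (c + s))) * qbinom (N - c) s = (qfact (nat (N - c)) :: 'a poly)"
    using True assms qbinom_qfact[of c "c + s"] qbinom_qfact[of s "N - c"]
    by (auto simp: qbinom_qfact diff_diff_eq)
  have "D * (qbinom N (c + s) * qbinom (c + s) c)
      = (qfact (nat c) * qfact (nat s) * qbinom (c + s) c) * qfact (nat (N - (c + s))) * qbinom N (c + s)"
    unfolding D_def by (simp only: ac_simps)
  also have "\<dots> = qfact (nat N)" by (simp only: f_cs fN_left)
  finally have left: "D * (qbinom N (c + s) * qbinom (c + s) c) = qfact (nat N)" .
  have "D * (qbinom N c * qbinom (N - c) s)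
      = (qfact (nat s) * qfact (nat (N - (c + s))) * qbinom (N - c) s) * qfact (nat c) * qbinom N c"
    unfolding D_def by (simp only: ac_simps)
  also have "\<dots> = qfact (nat (N - c)) * qfact (nat c) * qbinom N c" by (simp only: f_Nc)
  also have "\<dots> = qfact (nat N)" using fN_right by (simp only: ac_simps)
  finally have right: "D * (qbinom N c * qbinom (N - c) s) = qfact (nat N)" .
  have "D \<noteq> 0" unfolding D_def by (simp add: qfact_nonzero)
  with left right show ?thesis by (metis mult_left_cancel)
qed

text \<open>The q-Vandermonde identity \<Sum>_s q^{s(B-r+s)} [a, s][B, r-s] = [a+B, r], by induction on a
  using q-Pascal in the top entry a.  The summation range only needs to cover [0, a].\<close>
lemma q_vandermonde:
  fixes B M :: int
  assumes "0 \<le> B" "int a \<le> M"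
  shows "(\<Sum>s\<in>{0..M}. qpow (s * (B - r + s)) * qbinom (int a) s * qbinom B (r - s))
       = (qbinom (int a + B) r :: 'a::field poly)"
  using assms(2)
proof (induct a arbitrary: r)
  case 0
  have "(\<Sum>s\<in>{0..M}. qpow (s * (B - r + s)) * qbinom (int 0) s * qbinom B (r - s))
      = (\<Sum>s\<in>{0..M}. if s = 0 then (qbinom B r :: 'a poly) else 0)"
    by (rule sum.cong) (auto simp: qbinom_0_left)
  also have "\<dots> = qbinom B r" using 0 by simp
  finally show ?case by simp
next
  case (Suc a)
  then have M: "int a < M" by simp
  define g where "g u = qpow (u * (B - (r - 1) + u)) * qbinom (int a) u * (qbinom B (r - 1 - u) :: 'a poly)" for u
  have pascal: "qbinom (int (Suc a)) s = qpow (int a - (s - 1)) * qbinom (int a) (s - 1) + (qbinom (int a) s :: 'a poly)" for s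
    using qbinom_pascal[of "int a" "s - 1", where 'a='a] by (simp add: add.commute)
  text \<open>The terms coming from the first Pascal summand are shifted terms of the sum for r - 1.\<close>
  have shifted: "qpow (s * (B - r + s)) * (qpow (int a - (s - 1)) * qbinom (int a) (s - 1)) * qbinom B (r - s)
      = qpow (int a + B + 1 - r) * g (s - 1)" for s
  proof (cases "(qbinom (int a) (s - 1) :: 'a poly) = 0 \<or> qbinom B (r - s) = (0 :: 'a poly)")
    case True
    then show ?thesis unfolding g_def by (elim disjE) (simp_all add: diff_diff_eq)
  next
    case False
    then have b: "0 \<le> s - 1" "s - 1 \<le> int a" "0 \<le> r - s" "r - s \<le> B"
      by (auto dest!: qbinom_nonzeroD)
    have "qpow (s * (B - r + s)) * qpow (int a - (s - 1))
        = qpow (int a + B + 1 - r) * (qpow ((s - 1) * (B - (r - 1) + (s - 1))) :: 'a poly)"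
    proof (rule qpow_mult_eq)
      show "0 \<le> s * (B - r + s)" "0 \<le> (s - 1) * (B - (r - 1) + (s - 1))"
        using b by (auto intro: mult_nonneg_nonneg)
    qed (use b in \<open>auto simp: algebra_simps\<close>)
    then show ?thesis unfolding g_def by (simp add: ac_simps)
  qed
  have "(\<Sum>s\<in>{0..M}. g (s - 1)) = sum g {-1..M-1}"
    by (rule sum.reindex_bij_witness[of _ "\<lambda>u. u + 1" "\<lambda>s. s - 1"]) auto
  also have "\<dots> = sum g {0..M}"
  proof -
    have "sum g {-1..M-1} = sum g {0..int a}"
      using M by (intro sum.mono_neutral_right) (auto simp: g_def qbinom_outside)
    also have "\<dots> = sum g {0..M}"
      using M by (intro sum.mono_neutral_left) (auto simp: g_def qbinom_outside)
    finally show ?thesis .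
  qed
  also have "\<dots> = qbinom (int a + B) (r - 1)"
    unfolding g_def using M by (intro Suc.hyps) simp
  finally have first: "(\<Sum>s\<in>{0..M}. g (s - 1)) = qbinom (int a + B) (r - 1)" .
  have "(\<Sum>s\<in>{0..M}. qpow (s * (B - r + s)) * qbinom (int (Suc a)) s * qbinom B (r - s))
     = qpow (int a + B + 1 - r) * (\<Sum>s\<in>{0..M}. g (s - 1))
       + (\<Sum>s\<in>{0..M}. qpow (s * (B - r + s)) * qbinom (int a) s * (qbinom B (r - s) :: 'a poly))"
    unfolding sum_distrib_left sum.distrib[symmetric]
    by (rule sum.cong) (rule refl, simp only: pascal distrib_left distrib_right shifted[symmetric])
  also have "\<dots> = qpow (int a + B + 1 - r) * qbinom (int a + B) (r - 1) + qbinom (int a + B) r"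
    using first Suc.hyps M by simp
  also have "\<dots> = qbinom (int a + B + 1) r"
    using qbinom_pascal[of "int a + B" "r - 1", where 'a='a] assms(1) by (simp add: algebra_simps)
  finally show ?case by (simp add: algebra_simps)
qed

lemma qmultinom_prod:
  "qmultinom j n = (\<Prod>i=1..j. qbin (sum n {1..i}) (n i) :: 'a::field poly)"
proof -
  have factor: "qfact (sum n {1..j})
      = (\<Prod>i=1..j. qfact (n i)) * (\<Prod>i=1..j. qbin (sum n {1..i}) (n i) :: 'a poly)" for j
  proof (induct j)
    case 0 then show ?case by simp
  next
    case (Suc j)
    have "sum n {1..Suc j} - n (Suc j) = sum n {1..j}" by simp
    then have "(qfact (sum n {1..Suc j}) :: 'a poly)
        = qfact (n (Suc j)) * qfact (sum n {1..j}) * qbin (sum n {1..Suc j}) (n (Suc j))"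
      using qbin_qfact[of "n (Suc j)" "sum n {1..Suc j}", where 'a='a] by simp
    also have "\<dots> = qfact (n (Suc j)) * ((\<Prod>i=1..j. qfact (n i)) * (\<Prod>i=1..j. qbin (sum n {1..i}) (n i)))
        * qbin (sum n {1..Suc j}) (n (Suc j))"
      by (simp only: Suc)
    finally show ?case by (simp add: ac_simps)
  qed
  have "(\<Prod>i=1..j. qfact (n i) :: 'a poly) \<noteq> 0"
    by (simp add: qfact_nonzero)
  then show ?thesis unfolding qmultinom_def factor by simp
qed

lemma qmultinom_Suc:
  "qmultinom (Suc j) n
     = qmultinom j n * (qbinom (int (sum n {1..Suc j})) (int (n (Suc j))) :: 'a::field poly)"
  by (simp only: qmultinom_prod qbinom_of_nat) simp

text \<open>The weight of the step t_i = a \<rightarrow> t_{i+1} = b: the i-th factor of the product in the theorem.\<close>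
definition step_weight :: "(nat \<Rightarrow> nat) \<Rightarrow> nat \<Rightarrow> int \<Rightarrow> int \<Rightarrow> 'a::field poly" where
  "step_weight n i a b = [:0, 1:] ^ nat (b * (int (n (i+1)) - a + b))
                   * qbinom (int (n i) + a) (int (n i))
                   * qbinom (int (n i) + int (n (i+1))) (int (n i) + a - b)"

text \<open>A nonzero step weight forces b \<le> a + n_i; this bounds the tuples contributing to the sum.\<close>
lemma step_weight_nonzeroD: "step_weight n i a b \<noteq> 0 \<Longrightarrow> b \<le> a + int (n i)"
  unfolding step_weight_def by (auto dest!: qbinom_nonzeroD)

text \<open>One term of the transfer sum, rewritten by trinomial revision and symmetry into the
  shape of a q-Vandermonde summand (here c = n_k, d = n_{k+1}, N = N_k).\<close>
lemma transfer_term: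
  fixes N c d s s' :: int
  assumes "0 \<le> c" "c \<le> N" "0 \<le> d" "0 \<le> s" "0 \<le> s'"
  shows "qpow (s * (c + s)) * qbinom N (c + s) *
      ([:0,1:] ^ nat (s' * (d - s + s')) * qbinom (c + s) c * qbinom (c + d) (c + s - s'))
    = qbinom N c * qpow (s' * (d + s')) *
      (qpow (s * ((c + d) - (d + s') + s)) * qbinom (N - c) s * (qbinom (c + d) ((d + s') - s) :: 'a::field poly))"
proof -
  have symmetric: "qbinom (c + d) (c + s - s') = (qbinom (c + d) ((d + s') - s) :: 'a poly)"
    using qbinom_symmetric[of "c + d" "c + s - s'", where 'a='a] assms by (simp add: algebra_simps)
  show ?thesis
  proof (cases "qbinom (c + d) ((d + s') - s) = (0 :: 'a poly)")
    case True
    then show ?thesis by (simp add: symmetric)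
  next
    case False
    then have b: "0 \<le> d + s' - s" "d + s' - s \<le> c + d" by (auto dest!: qbinom_nonzeroD)
    have powers: "qpow (s * (c + s)) * ([:0,1:] ^ nat (s' * (d - s + s')) :: 'a poly)
        = qpow (s' * (d + s')) * qpow (s * ((c + d) - (d + s') + s))"
      unfolding qpow_def[of "s' * (d - s + s')", symmetric]
    proof (rule qpow_mult_eq)
      show "0 \<le> s' * (d - s + s')" "0 \<le> s * ((c + d) - (d + s') + s)"
        using assms b by (auto intro: mult_nonneg_nonneg)
    qed (use assms in \<open>auto simp: algebra_simps\<close>)
    have "qbinom N (c + s) * qbinom (c + s) c = qbinom N c * (qbinom (N - c) s :: 'a poly)"
      using assms by (intro qbinom_trinomial) auto
    then show ?thesis
      using powers by (simp add: symmetric ac_simps)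
  qed
qed

text \<open>Summing the transfer terms over s by q-Vandermonde: the closed form of G_k propagates
  to G_{k+1}.\<close>
lemma transfer_sum:
  fixes N M c d s' :: int
  assumes "0 \<le> c" "c \<le> N" "N \<le> M" "0 \<le> d" "0 \<le> s'"
  shows "(\<Sum>s\<in>{0..M}. qpow (s * (c + s)) * qbinom N (c + s) *
      ([:0,1:] ^ nat (s' * (d - s + s')) * qbinom (c + s) c * qbinom (c + d) (c + s - s')))
    = qpow (s' * (d + s')) * qbinom (N + d) (d + s') * (qbinom N c :: 'a::field poly)"
proof -
  obtain a where a: "N - c = int a" using assms by (metis eq_nat_nat_iff diff_ge_0_iff_ge nat_int zero_le_imp_eq_int)
  have "(\<Sum>s\<in>{0..M}. qpow (s * (c + s)) * qbinom N (c + s) *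
      ([:0,1:] ^ nat (s' * (d - s + s')) * qbinom (c + s) c * qbinom (c + d) (c + s - s')))
    = (\<Sum>s\<in>{0..M}. qbinom N c * qpow (s' * (d + s')) *
      (qpow (s * ((c + d) - (d + s') + s)) * qbinom (int a) s * (qbinom (c + d) ((d + s') - s) :: 'a poly)))"
    using assms by (intro sum.cong refl) (simp add: transfer_term flip: a)
  also have "\<dots> = qbinom N c * qpow (s' * (d + s')) * qbinom (int a + (c + d)) (d + s')"
    unfolding sum_distrib_left[symmetric] using assms a by (subst q_vandermonde) auto
  also have "\<dots> = qpow (s' * (d + s')) * qbinom (N + d) (d + s') * qbinom N c"
    using a by (simp add: algebra_simps)
  finally show ?thesis .
qed

text \<open>Tuples t_1, ..., t_k with entries in [0, M], extended by 0 outside {1..k}: a finite set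
  containing the support of the sum in the theorem once M \<ge> N_k.\<close>
definition bounded_tuples :: "nat \<Rightarrow> int \<Rightarrow> (nat \<Rightarrow> int) set" where
  "bounded_tuples k M = {t. \<forall>x. (x \<in> {1..k} \<longrightarrow> t x \<in> {0..M}) \<and> (x \<notin> {1..k} \<longrightarrow> t x = 0)}"

lemma finite_bounded_tuples: "finite (bounded_tuples k M)"
  unfolding bounded_tuples_def by (rule finite_set_of_finite_funs) auto

text \<open>A (k+1)-tuple is a k-tuple together with its last entry.\<close>
lemma sum_bounded_tuples_Suc:
  "sum f (bounded_tuples (Suc k) M) = (\<Sum>t\<in>bounded_tuples k M. \<Sum>b\<in>{0..M}. f (t(Suc k := b)))"
proof -
  have "sum f (bounded_tuples (Suc k) M) = (\<Sum>(t, b)\<in>bounded_tuples k M \<times> {0..M}. f (t(Suc k := b)))"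
    by (rule sum.reindex_bij_witness[of _ "\<lambda>(t, b). t(Suc k := b)" "\<lambda>t. (t(Suc k := 0), t (Suc k))"])
       (auto simp: bounded_tuples_def le_Suc_eq)
  then show ?thesis by (simp add: sum.cartesian_product)
qed

definition path_weight :: "(nat \<Rightarrow> nat) \<Rightarrow> nat \<Rightarrow> (nat \<Rightarrow> int) \<Rightarrow> 'a::field poly" where
  "path_weight n k t = (\<Prod>i=1..k-1. step_weight n i (t i) (t (i+1)))"

lemma path_weight_Suc:
  assumes "1 \<le> k"
  shows "path_weight n (Suc k) (t(Suc k := b)) = path_weight n k t * step_weight n k (t k) b"
proof -
  let ?t = "t(Suc k := b)"
  obtain j where k: "k = Suc j" using assms by (cases k) auto
  have "path_weight n (Suc k) ?t = (\<Prod>i=1..j. step_weight n i (?t i) (?t (i+1))) * step_weight n k (?t k) (?t (k+1))"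
    unfolding path_weight_def by (simp add: k prod.cl_ivl_Suc)
  also have "(\<Prod>i=1..j. step_weight n i (?t i) (?t (i+1))) = path_weight n k t"
    unfolding path_weight_def k by (intro prod.cong) auto
  also have "step_weight n k (?t k) (?t (k+1)) = step_weight n k (t k) b"
    by simp
  finally show ?thesis .
qed

definition partial_sum :: "(nat \<Rightarrow> nat) \<Rightarrow> nat \<Rightarrow> int \<Rightarrow> int \<Rightarrow> 'a::field poly" where
  "partial_sum n k M s =
     (\<Sum>t\<in>bounded_tuples k M. if t 1 = 0 \<and> t k = s then path_weight n k t else 0)"

text \<open>For k = 1 only the zero tuple starts at 0, and its (empty) weight is 1.\<close>
lemma partial_sum_1:
  assumes "0 \<le> M"
  shows "partial_sum n 1 M s = (if s = 0 then 1 else 0)"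
proof -
  have "t 1 = 0 \<longleftrightarrow> t = (\<lambda>_. 0)" if "t \<in> bounded_tuples 1 M" for t
    using that by (auto simp: bounded_tuples_def)
  then have "partial_sum n 1 M s
      = (\<Sum>t\<in>bounded_tuples 1 M. if t = (\<lambda>_. 0) then (if s = 0 then 1 else 0) else 0)"
    unfolding partial_sum_def path_weight_def by (intro sum.cong) auto
  moreover have "(\<lambda>_. 0) \<in> bounded_tuples 1 M" using assms by (simp add: bounded_tuples_def)
  ultimately show ?thesis by (simp add: finite_bounded_tuples)
qed

lemma partial_sum_Suc:
  assumes "1 \<le> k" "0 \<le> s'" "s' \<le> M"
  shows "partial_sum n (Suc k) M s'
    = (\<Sum>s\<in>{0..M}. partial_sum n k M s * (step_weight n k s s' :: 'a::field poly))"
proof -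
  let ?T = "bounded_tuples k M"
  define W where "W t s = (if t 1 = 0 then path_weight n k t * step_weight n k s s' else 0 :: 'a poly)"
    for t s
  have "partial_sum n (Suc k) M s'
      = (\<Sum>t\<in>?T. \<Sum>b\<in>{0..M}. if b = s'
           then (if t 1 = 0 then path_weight n k t * step_weight n k (t k) b else 0) else 0)"
    unfolding partial_sum_def sum_bounded_tuples_Suc
    using assms by (intro sum.cong refl) (auto simp: path_weight_Suc)
  also have "\<dots> = (\<Sum>t\<in>?T. W t (t k))"
    using assms by (simp add: W_def)
  also have "\<dots> = (\<Sum>t\<in>?T. \<Sum>s\<in>{0..M}. if t k = s then W t s else 0)"
  proof (intro sum.cong refl)
    fix t assume "t \<in> ?T"
    then have "t k \<in> {0..M}" using assms by (auto simp: bounded_tuples_def)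
    then show "W t (t k) = (\<Sum>s\<in>{0..M}. if t k = s then W t s else 0)"
      by (simp add: sum.delta)
  qed
  also have "\<dots> = (\<Sum>s\<in>{0..M}. partial_sum n k M s * step_weight n k s s')"
    unfolding partial_sum_def sum_distrib_right
    by (subst sum.swap) (auto simp: W_def intro!: sum.cong)
  finally show ?thesis .
qed

lemma partial_sum_closed_form:
  assumes "1 \<le> k" "int (sum n {1..k}) \<le> M" "0 \<le> s" "s \<le> M"
  shows "partial_sum n k M s = qpow (s * (int (n k) + s))
      * qbinom (int (sum n {1..k})) (int (n k) + s) * (qmultinom (k - 1) n :: 'a::field poly)"
  using assms
proof (induct k arbitrary: s rule: nat_induct_at_least)
  case base
  then have "0 \<le> M" by linarith
  then show ?case using base
    by (cases "s = 0") (simp_all add: partial_sum_1[unfolded One_nat_def] qmultinom_def qbinom_diag qbinom_outside)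
next
  case (Suc k s')
  let ?c = "int (n k)" and ?d = "int (n (Suc k))" and ?N = "int (sum n {1..k})"
  let ?K = "qmultinom (k - 1) n :: 'a poly"
  have N_le: "?N \<le> M" using Suc.prems by simp
  have c_le: "?c \<le> ?N"
    using Suc.hyps(1) by (simp only: of_nat_le_iff) (rule member_le_sum, auto)
  have "partial_sum n (Suc k) M s' = (\<Sum>s\<in>{0..M}. partial_sum n k M s * step_weight n k s s')"
    using Suc by (intro partial_sum_Suc) auto
  also have "\<dots> = ?K * (\<Sum>s\<in>{0..M}. qpow (s * (?c + s)) * qbinom ?N (?c + s) *
      ([:0,1:] ^ nat (s' * (?d - s + s')) * qbinom (?c + s) ?c * qbinom (?c + ?d) (?c + s - s')))"
    unfolding sum_distrib_left
    by (intro sum.cong refl) (simp add: Suc.hyps(2)[OF N_le] step_weight_def ac_simps)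
  also have "\<dots> = ?K * (qpow (s' * (?d + s')) * qbinom (?N + ?d) (?d + s') * qbinom ?N ?c)"
    using c_le N_le Suc.prems by (subst transfer_sum) auto
  also have "\<dots> = qpow (s' * (?d + s')) * qbinom (int (sum n {1..Suc k})) (?d + s')
      * qmultinom (Suc k - 1) n"
    using qmultinom_Suc[of "k - 1" n, where 'a='a] Suc.hyps(1) by (simp add: ac_simps)
  finally show ?case .
qed

text \<open>Every tuple with nonzero weight satisfies t_{i+1} \<le> t_i + n_i, hence t_i \<le> N_{i-1} \<le> N_k:
  the support of the sum lies in the bounded tuples.\<close>
lemma support_bounded:
  assumes "\<forall>i\<in>{1..k}. t i \<ge> 0" "t 1 = 0" "\<forall>i. i \<notin> {1..k} \<longrightarrow> t i = 0"
    and nonzero: "path_weight n k t \<noteq> (0 :: 'a::field poly)"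
  shows "t \<in> bounded_tuples k (int (sum n {1..k}))"
proof -
  have step: "t (Suc i) \<le> t i + int (n i)" if "1 \<le> i" "i < k" for i
    using nonzero that by (auto simp: path_weight_def intro: step_weight_nonzeroD)
  have bound: "t i \<le> int (sum n {1..<i})" if "1 \<le> i" "i \<le> k" for i
    using that
  proof (induct i rule: nat_induct_at_least)
    case base then show ?case using assms(2) by simp
  next
    case (Suc i) then show ?case using step[of i] by simp
  qed
  have "sum n {1..<i} \<le> sum n {1..k}" if "i \<in> {1..k}" for i
    using that by (intro sum_mono2) auto
  then show ?thesis
    using assms bound unfolding bounded_tuples_def by (force simp del: of_nat_sum)
qed

theorem lemma4p2:
  fixes k :: nat and n :: "nat \<Rightarrow> nat"
  assumes "k \<ge> 1"
  shows "Sum_any (\<lambda>t :: nat \<Rightarrow> int.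
           if (\<forall>i\<in>{1..k}. t i \<ge> 0) \<and> t 1 = 0 \<and> t k = 0 \<and> (\<forall>i. i \<notin> {1..k} \<longrightarrow> t i = 0)
           then (\<Prod>i=1..k-1.
                   [:0, 1:] ^ nat (t (i+1) * (int (n (i+1)) - t i + t (i+1)))
                   * qbinom (int (n i) + t i) (int (n i))
                   * qbinom (int (n i) + int (n (i+1))) (int (n i) + t i - t (i+1)))
           else 0)
         = (qmultinom k n :: 'a::field_char_0 poly)"
proof -
  define N where "N = int (sum n {1..k})"
  define F where "F t = (if (\<forall>i\<in>{1..k}. t i \<ge> 0) \<and> t 1 = 0 \<and> t k = 0 \<and> (\<forall>i. i \<notin> {1..k} \<longrightarrow> t i = 0)
           then path_weight n k t else (0 :: 'a poly))" for t
  have "t \<in> bounded_tuples k N" if "F t \<noteq> 0" for t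
    unfolding N_def using that by (intro support_bounded) (auto simp: F_def split: if_splits)
  then have "{t. F t \<noteq> 0} \<subseteq> bounded_tuples k N" by blast
  then have "Sum_any F = sum F (bounded_tuples k N)"
    by (rule Sum_any.expand_superset[OF finite_bounded_tuples])
  also have "\<dots> = partial_sum n k N 0"
    unfolding partial_sum_def F_def by (intro sum.cong) (auto simp: bounded_tuples_def)
  also have "\<dots> = qbinom N (int (n k)) * qmultinom (k - 1) n"
    using partial_sum_closed_form[of k n N 0] assms by (simp add: N_def sum_nonneg)
  also have "\<dots> = qmultinom k n"
    using qmultinom_Suc[of "k - 1" n, where 'a='a] assms by (simp add: N_def ac_simps)
  finally show ?thesis
    unfolding F_def path_weight_def step_weight_def .
qed

end
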